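(* Let $D\subseteq\mathbb{C}$ be a domain and let $f$, $g$, $\alpha$ be meromorphic functions on $D$ such that $\alpha$ is not identically $0$ and not identically $\infty$. Suppose that on $D$ the functions $f$ and $g$ share the function $\alpha$ CM in the sense of value. Then $\frac{f}{\alpha}$ and $\frac{g}{\alpha}$ share the value $1$ CM on $D$, i.e. for every $z_0\in D$ and every $m\ge 1$, $\frac{f}{\alpha}-1$ has a zero of order $m$ at $z_0$ if and only if $\frac{g}{\alpha}-1$ has a zero of order $m$ at $z_0$.
   Context: Sharing CM in the sense of value: $f$ and $g$ share $\alpha$ CM in the sense of value on $D$ if for every $z_0\in D$: (i) if $\alpha(z_0)\neq\infty$, then for every $m\ge1$, $f-\alpha$ has a zero of order $m$ at $z_0$ if and only if $g-\alpha$ has a zero of order $m$ at $z_0$; (ii) if $\alpha(z_0)=\infty$, then for every $m\ge1$, $\frac{1}{f}-\frac{1}{\alpha}$ has a zero of order $m$ at $z_0$ if and only if $\frac{1}{g}-\frac{1}{\alpha}$ has a zero of order $m$ at $z_0$. *)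

theory Defs
  imports "HOL-Complex_Analysis.Complex_Analysis"
begin

text \<open>A meromorphic function is represented by a function complex \<Rightarrow> complex
  satisfying meromorphic_on; its value at a pole is a junk value, and the point
  z is a pole (value infinity) iff is_pole h z.  "h has a zero of order m at z"
  (m \<ge> 1) is expressed via the order zorder, which only depends on h on a punctured
  neighbourhood of z; we require h not to vanish identically near z.\<close>

definition zero_of_order :: "(complex \<Rightarrow> complex) \<Rightarrow> complex \<Rightarrow> nat \<Rightarrow> bool" where
  "zero_of_order h z m \<longleftrightarrow> (\<exists>\<^sub>F w in at z. h w \<noteq> 0) \<and> zorder h z = int m"

text \<open>If f vanished identically near z,
  1/f would be identically infinity (no zero); HOL's inverse 0 = 0 convention is
  excluded by requiring f not to vanish identically near z.\<close>

definition recip_diff_zero_of_order ::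
  "(complex \<Rightarrow> complex) \<Rightarrow> (complex \<Rightarrow> complex) \<Rightarrow> complex \<Rightarrow> nat \<Rightarrow> bool" where
  "recip_diff_zero_of_order f \<alpha> z m \<longleftrightarrow>
     (\<exists>\<^sub>F w in at z. f w \<noteq> 0) \<and> zero_of_order (\<lambda>w. inverse (f w) - inverse (\<alpha> w)) z m"

definition share_CM_value ::
  "(complex \<Rightarrow> complex) \<Rightarrow> (complex \<Rightarrow> complex) \<Rightarrow> (complex \<Rightarrow> complex) \<Rightarrow> complex set \<Rightarrow> bool" where
  "share_CM_value f g \<alpha> D \<longleftrightarrow>
     (\<forall>z\<in>D. \<forall>m::nat. m \<ge> 1 \<longrightarrow>
        (\<not> is_pole \<alpha> z \<longrightarrow>
           (zero_of_order (\<lambda>w. f w - \<alpha> w) z m \<longleftrightarrow> zero_of_order (\<lambda>w. g w - \<alpha> w) z m)) \<and>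
        (is_pole \<alpha> z \<longrightarrow>
           (recip_diff_zero_of_order f \<alpha> z m \<longleftrightarrow> recip_diff_zero_of_order g \<alpha> z m)))"

end

theory Submission
  imports Defs
begin

text \<open>Away from the zeros of \<alpha>, f/\<alpha> - 1 = (f - \<alpha>)/\<alpha>, so its order at z is
  ord(f - \<alpha>) - ord \<alpha>. Where \<alpha> is finite (ord \<alpha> \<ge> 0), f/\<alpha> - 1 has a zero of order m
  exactly when f - \<alpha> has a zero of order m + ord \<alpha>. At a pole of \<alpha> one uses instead
  1/f - 1/\<alpha> = -(f - \<alpha>)/(f \<alpha>): since the order of a difference is the minimum of the
  orders whenever these differ, a zero of either f/\<alpha> - 1 or 1/f - 1/\<alpha> forces
  ord f = ord \<alpha>, and then f/\<alpha> - 1 has a zero of order m exactly when 1/f - 1/\<alpha> has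
  one of order m - ord \<alpha>.\<close>

lemma meromorphic_frequently_nonzero_imp_eventually_nonzero:
  fixes h :: "complex \<Rightarrow> complex"
  assumes "h meromorphic_on {z}" and "\<exists>\<^sub>F w in at z. h w \<noteq> 0"
  shows "\<forall>\<^sub>F w in at z. h w \<noteq> 0"
proof (rule ccontr)
  assume "\<not> (\<forall>\<^sub>F w in at z. h w \<noteq> 0)"
  hence "\<exists>\<^sub>F w in at z. h w = 0" by (simp add: not_eventually)
  hence "\<forall>\<^sub>F w in at z. h w = 0"
    using assms(1) not_essential_frequently_0_imp_eventually_0 meromorphic_at_iff by blast
  with assms(2) show False by (simp add: frequently_def)
qed

lemma meromorphic_on_connected_eventually_nonzero:
  fixes h :: "complex \<Rightarrow> complex"
  assumes "h meromorphic_on D" "open D" "connected D"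
    and "\<exists>z\<in>D. \<exists>\<^sub>F w in at z. h w \<noteq> 0" and "z \<in> D"
  shows "\<forall>\<^sub>F w in at z. h w \<noteq> 0"
proof -
  have "eventually (\<lambda>w. h w = 0) (cosparse D) \<or> eventually (\<lambda>w. h w \<noteq> 0) (cosparse D)"
    by (rule meromorphic_imp_constant_or_avoid[OF assms(1-3)])
  moreover have "\<not> eventually (\<lambda>w. h w = 0) (cosparse D)"
    using assms(2,4) by (auto simp: eventually_cosparse_open_eq frequently_def)
  ultimately show ?thesis
    using assms(2,5) by (simp add: eventually_cosparse_open_eq)
qed

lemma zero_of_order_cong:
  assumes "\<forall>\<^sub>F w in at z. h1 w = h2 w"
  shows "zero_of_order h1 z m \<longleftrightarrow> zero_of_order h2 z m"
proof -
  have "(\<exists>\<^sub>F w in at z. h1 w \<noteq> 0) \<longleftrightarrow> (\<exists>\<^sub>F w in at z. h2 w \<noteq> 0)"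
    by (rule frequently_cong[OF assms]) simp
  moreover have "zorder h1 z = zorder h2 z"
    by (rule zorder_cong[OF assms refl])
  ultimately show ?thesis
    unfolding zero_of_order_def by simp
qed

lemma zorder_diff_eq_min:
  fixes f g :: "complex \<Rightarrow> complex"
  assumes "f meromorphic_on {z}" "\<exists>\<^sub>F w in at z. f w \<noteq> 0"
    and "g meromorphic_on {z}" "\<exists>\<^sub>F w in at z. g w \<noteq> 0"
    and "zorder f z \<noteq> zorder g z"
  shows "zorder (\<lambda>w. f w - g w) z = min (zorder f z) (zorder g z)"
  using assms zorder_diff1[OF assms(1-4)] zorder_diff2[OF assms(1-4)] by linarith

lemma zero_of_order_divide_minus_one_iff:
  fixes f \<alpha> :: "complex \<Rightarrow> complex"
  assumes f: "f meromorphic_on {z}" and \<alpha>: "\<alpha> meromorphic_on {z}"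
    and \<alpha>_nz: "\<forall>\<^sub>F w in at z. \<alpha> w \<noteq> 0"
  shows "zero_of_order (\<lambda>w. f w / \<alpha> w - 1) z m \<longleftrightarrow>
     (\<exists>\<^sub>F w in at z. f w - \<alpha> w \<noteq> 0) \<and> zorder (\<lambda>w. f w - \<alpha> w) z - zorder \<alpha> z = int m"
proof -
  have "zero_of_order (\<lambda>w. f w / \<alpha> w - 1) z m \<longleftrightarrow> zero_of_order (\<lambda>w. (f w - \<alpha> w) / \<alpha> w) z m"
    by (rule zero_of_order_cong, rule eventually_mono[OF \<alpha>_nz]) (simp add: field_simps)
  moreover have "(\<exists>\<^sub>F w in at z. (f w - \<alpha> w) / \<alpha> w \<noteq> 0) \<longleftrightarrow> (\<exists>\<^sub>F w in at z. f w - \<alpha> w \<noteq> 0)"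
    by (rule frequently_cong[OF \<alpha>_nz]) simp
  moreover have "zorder (\<lambda>w. (f w - \<alpha> w) / \<alpha> w) z = zorder (\<lambda>w. f w - \<alpha> w) z - zorder \<alpha> z"
    if "\<exists>\<^sub>F w in at z. f w - \<alpha> w \<noteq> 0"
    by (rule zorder_divide) (use that f \<alpha> \<alpha>_nz in \<open>auto intro!: meromorphic_intros
          simp: eventually_frequently\<close>)
  ultimately show ?thesis
    unfolding zero_of_order_def by auto
qed

lemma zero_of_order_divide_minus_one_not_pole:
  fixes f \<alpha> :: "complex \<Rightarrow> complex"
  assumes f: "f meromorphic_on {z}" and \<alpha>: "\<alpha> meromorphic_on {z}"
    and \<alpha>_nz: "\<forall>\<^sub>F w in at z. \<alpha> w \<noteq> 0" and not_pole: "\<not> is_pole \<alpha> z"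
  shows "zero_of_order (\<lambda>w. f w / \<alpha> w - 1) z m \<longleftrightarrow>
     zero_of_order (\<lambda>w. f w - \<alpha> w) z (nat (int m + zorder \<alpha> z))"
proof -
  have "zorder \<alpha> z \<ge> 0"
    using zorder_neg_imp_is_pole[OF \<alpha> \<alpha>_nz] not_pole by linarith
  thus ?thesis
    unfolding zero_of_order_divide_minus_one_iff[OF f \<alpha> \<alpha>_nz] unfolding zero_of_order_def
    by auto
qed

lemma recip_diff_zero_of_order_iff:
  fixes f \<alpha> :: "complex \<Rightarrow> complex"
  assumes f: "f meromorphic_on {z}" and \<alpha>: "\<alpha> meromorphic_on {z}"
    and \<alpha>_nz: "\<forall>\<^sub>F w in at z. \<alpha> w \<noteq> 0"
  shows "recip_diff_zero_of_order f \<alpha> z k \<longleftrightarrow>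
     (\<exists>\<^sub>F w in at z. f w \<noteq> 0) \<and> (\<exists>\<^sub>F w in at z. f w - \<alpha> w \<noteq> 0) \<and>
     zorder (\<lambda>w. f w - \<alpha> w) z - zorder f z - zorder \<alpha> z = int k"
proof (cases "\<exists>\<^sub>F w in at z. f w \<noteq> 0")
  case False
  thus ?thesis
    unfolding recip_diff_zero_of_order_def by blast
next
  case f_freq: True
  define F where "F = (\<lambda>w. f w - \<alpha> w)"
  define R where "R = (\<lambda>w. inverse (f w) - inverse (\<alpha> w))"
  have f_nz: "\<forall>\<^sub>F w in at z. f w \<noteq> 0"
    by (rule meromorphic_frequently_nonzero_imp_eventually_nonzero[OF f f_freq])
  have R_eq: "\<forall>\<^sub>F w in at z. R w = - F w / (f w * \<alpha> w)"
    using f_nz \<alpha>_nz by eventually_elim (simp add: R_def F_def field_simps)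
  show ?thesis
  proof (cases "\<exists>\<^sub>F w in at z. F w \<noteq> 0")
    case F_freq: True
    have "zorder R z = zorder (\<lambda>w. - F w / (f w * \<alpha> w)) z"
      by (rule zorder_cong[OF R_eq refl])
    also have "\<dots> = zorder (\<lambda>w. - F w) z - zorder (\<lambda>w. f w * \<alpha> w) z"
    proof (rule zorder_divide)
      show "\<exists>\<^sub>F w in at z. - F w \<noteq> 0"
        using F_freq by simp
      have "\<forall>\<^sub>F w in at z. f w * \<alpha> w \<noteq> 0"
        using f_nz \<alpha>_nz by eventually_elim simp
      thus "\<exists>\<^sub>F w in at z. f w * \<alpha> w \<noteq> 0"
        by (simp add: eventually_frequently)
    qed (auto intro!: meromorphic_intros f \<alpha> simp: F_def)
    also have "zorder (\<lambda>w. f w * \<alpha> w) z = zorder f z + zorder \<alpha> z"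
      using \<alpha>_nz by (intro zorder_mult[OF f f_freq \<alpha>]) (simp add: eventually_frequently)
    finally have "zorder R z = zorder F z - zorder f z - zorder \<alpha> z"
      by simp
    moreover have "\<exists>\<^sub>F w in at z. R w \<noteq> 0"
    proof -
      have "F meromorphic_on {z}"
        unfolding F_def by (intro meromorphic_intros f \<alpha>)
      hence "\<forall>\<^sub>F w in at z. F w \<noteq> 0"
        using F_freq by (rule meromorphic_frequently_nonzero_imp_eventually_nonzero)
      with R_eq f_nz \<alpha>_nz have "\<forall>\<^sub>F w in at z. R w \<noteq> 0"
        by eventually_elim simp
      thus ?thesis
        by (simp add: eventually_frequently)
    qed
    ultimately show ?thesis
      using f_freq F_freq
      unfolding recip_diff_zero_of_order_def zero_of_order_def R_def[symmetric]
      by (auto simp: F_def)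
  next
    case False
    hence "\<forall>\<^sub>F w in at z. R w = 0"
      using R_eq by (auto simp: not_frequently elim: eventually_elim2)
    hence "\<not> (\<exists>\<^sub>F w in at z. R w \<noteq> 0)"
      by (simp add: frequently_def)
    with False show ?thesis
      unfolding recip_diff_zero_of_order_def zero_of_order_def R_def[symmetric] F_def
      by blast
  qed
qed

lemma zero_of_order_divide_minus_one_pole:
  fixes f \<alpha> :: "complex \<Rightarrow> complex"
  assumes f: "f meromorphic_on {z}" and \<alpha>: "\<alpha> meromorphic_on {z}"
    and \<alpha>_nz: "\<forall>\<^sub>F w in at z. \<alpha> w \<noteq> 0" and pole: "is_pole \<alpha> z" and "m \<ge> 1"
  shows "zero_of_order (\<lambda>w. f w / \<alpha> w - 1) z m \<longleftrightarrow>
     recip_diff_zero_of_order f \<alpha> z (nat (int m - zorder \<alpha> z))"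
proof -
  define F where "F = (\<lambda>w. f w - \<alpha> w)"
  define a where "a = zorder f z"
  define b where "b = zorder F z"
  define c where "c = zorder \<alpha> z"
  have "c < 0"
    unfolding c_def using isolated_pole_imp_neg_zorder pole \<alpha> meromorphic_at_iff by blast
  hence "int (nat (int m - c)) = int m - c"
    by simp
  hence rhs: "recip_diff_zero_of_order f \<alpha> z (nat (int m - zorder \<alpha> z)) \<longleftrightarrow>
      (\<exists>\<^sub>F w in at z. f w \<noteq> 0) \<and> (\<exists>\<^sub>F w in at z. F w \<noteq> 0) \<and> b - a = int m"
    unfolding recip_diff_zero_of_order_iff[OF f \<alpha> \<alpha>_nz] F_def a_def b_def c_def by auto
  have lhs: "zero_of_order (\<lambda>w. f w / \<alpha> w - 1) z m \<longleftrightarrow>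
      (\<exists>\<^sub>F w in at z. F w \<noteq> 0) \<and> b - c = int m"
    unfolding zero_of_order_divide_minus_one_iff[OF f \<alpha> \<alpha>_nz] F_def b_def c_def ..
  have \<alpha>_freq: "\<exists>\<^sub>F w in at z. \<alpha> w \<noteq> 0"
    using \<alpha>_nz by (simp add: eventually_frequently)
  have b_min: "b = min a c"
    if "\<exists>\<^sub>F w in at z. f w \<noteq> 0" "a \<noteq> c"
    unfolding a_def b_def c_def F_def using that(2)[unfolded a_def c_def]
    by (rule zorder_diff_eq_min[OF f that(1) \<alpha> \<alpha>_freq])
  show ?thesis
    unfolding lhs rhs
  proof safe
    assume "\<exists>\<^sub>F w in at z. F w \<noteq> 0" and "b - c = int m"
    hence "b > c"
      using \<open>m \<ge> 1\<close> by simp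
    show f_freq: "\<exists>\<^sub>F w in at z. f w \<noteq> 0"
    proof (rule ccontr)
      assume "\<not> (\<exists>\<^sub>F w in at z. f w \<noteq> 0)"
      hence "\<forall>\<^sub>F w in at z. F w = - \<alpha> w"
        unfolding F_def not_frequently by (rule eventually_mono) simp
      hence "b = c"
        unfolding b_def c_def using zorder_cong[of F "\<lambda>w. - \<alpha> w" z z] by simp
      with \<open>b > c\<close> show False
        by simp
    qed
    have "a = c"
      using b_min[OF f_freq] \<open>b > c\<close> by fastforce
    with \<open>b - c = int m\<close> show "b - a = int m"
      by simp
  next
    assume f_freq: "\<exists>\<^sub>F w in at z. f w \<noteq> 0" and "b - a = int m"
    hence "a = c"
      using b_min[OF f_freq] \<open>m \<ge> 1\<close> by fastforce
    with \<open>b - a = int m\<close> show "b - c = int m"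
      by simp
  qed
qed

theorem theorem2:
  fixes f g \<alpha> :: "complex \<Rightarrow> complex" and D :: "complex set"
  assumes "open D" and "connected D"
    and "f meromorphic_on D" and "g meromorphic_on D" and "\<alpha> meromorphic_on D"
    and "\<exists>z\<in>D. \<exists>\<^sub>F w in at z. \<alpha> w \<noteq> 0"
    and "\<not> (\<forall>z\<in>D. is_pole \<alpha> z)"
    and "share_CM_value f g \<alpha> D"
  shows "\<forall>z\<in>D. \<forall>m::nat. m \<ge> 1 \<longrightarrow>
           (zero_of_order (\<lambda>w. f w / \<alpha> w - 1) z m \<longleftrightarrow> zero_of_order (\<lambda>w. g w / \<alpha> w - 1) z m)"
proof (intro ballI allI impI)
  fix z and m :: nat
  assume "z \<in> D" and "m \<ge> 1"
  have \<alpha>_nz: "\<forall>\<^sub>F w in at z. \<alpha> w \<noteq> 0"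
    using meromorphic_on_connected_eventually_nonzero assms(5,1,2,6) \<open>z \<in> D\<close> by blast
  have f: "f meromorphic_on {z}" and g: "g meromorphic_on {z}" and \<alpha>: "\<alpha> meromorphic_on {z}"
    using assms(3-5) \<open>z \<in> D\<close> meromorphic_on_subset by blast+
  show "zero_of_order (\<lambda>w. f w / \<alpha> w - 1) z m \<longleftrightarrow> zero_of_order (\<lambda>w. g w / \<alpha> w - 1) z m"
  proof (cases "is_pole \<alpha> z")
    case True
    have "zorder \<alpha> z < 0"
      using isolated_pole_imp_neg_zorder True \<alpha> meromorphic_at_iff by blast
    hence "nat (int m - zorder \<alpha> z) \<ge> 1"
      by linarith
    with True show ?thesis
      unfolding zero_of_order_divide_minus_one_pole[OF f \<alpha> \<alpha>_nz True \<open>m \<ge> 1\<close>]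
        zero_of_order_divide_minus_one_pole[OF g \<alpha> \<alpha>_nz True \<open>m \<ge> 1\<close>]
      using assms(8) \<open>z \<in> D\<close> unfolding share_CM_value_def by blast
  next
    case False
    have "zorder \<alpha> z \<ge> 0"
      using zorder_neg_imp_is_pole[OF \<alpha> \<alpha>_nz] False by linarith
    hence "nat (int m + zorder \<alpha> z) \<ge> 1"
      using \<open>m \<ge> 1\<close> by linarith
    with False show ?thesis
      unfolding zero_of_order_divide_minus_one_not_pole[OF f \<alpha> \<alpha>_nz False]
        zero_of_order_divide_minus_one_not_pole[OF g \<alpha> \<alpha>_nz False]
      using assms(8) \<open>z \<in> D\<close> unfolding share_CM_value_def by blast
  qed
qed

end
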